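(* Let $\Gamma$ be a countable simple graph whose vertex degrees are bounded by $k$, and let a group $H$ act on $\Gamma$ by graph automorphisms with finitely many orbits of vertices and of edges. Then there exists an $H$-invariant probability measure $\mu$ on $C_{k+1}(\Gamma)$.
   Context: For $n\ge 1$, an $n$-colouring of $\Gamma$ is a map $c:V(\Gamma)\to[n]=\{1,\dots,n\}$ with $c(v_1)\neq c(v_2)$ whenever $\{v_1,v_2\}$ is an edge; $C_n(\Gamma)$ is the set of $n$-colourings, viewed as a (closed) subset of $[n]^{V(\Gamma)}$ with the product topology. $[n]^{V(\Gamma)}$ carries the $\sigma$-algebra generated by the sets $A_{v,j}=\{f: f(v)=j\}$ ($v\in V(\Gamma)$, $j\in[n]$), and $C_n(\Gamma)$ the induced one. $H$ acts on $[n]^{V(\Gamma)}$ and on $C_n(\Gamma)$ by $h\cdot f=f\circ h^{-1}$; $\mu$ is $H$-invariant if $\mu(hA)=\mu(A)$ for all measurable $A$ and $h\in H$. *)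

theory Defs
  imports "HOL-Analysis.Analysis" "HOL-Probability.Probability" "HOL-Algebra.Group_Action"
begin

definition simple_graph :: "'v set \<Rightarrow> ('v \<Rightarrow> 'v \<Rightarrow> bool) \<Rightarrow> bool" where
  "simple_graph V adj \<longleftrightarrow>
     (\<forall>v w. adj v w \<longrightarrow> v \<in> V \<and> w \<in> V \<and> v \<noteq> w) \<and> (\<forall>v w. adj v w \<longrightarrow> adj w v)"

definition degree_bounded :: "'v set \<Rightarrow> ('v \<Rightarrow> 'v \<Rightarrow> bool) \<Rightarrow> nat \<Rightarrow> bool" where
  "degree_bounded V adj k \<longleftrightarrow> (\<forall>v\<in>V. finite {w. adj v w} \<and> card {w. adj v w} \<le> k)"

definition graph_edges :: "('v \<Rightarrow> 'v \<Rightarrow> bool) \<Rightarrow> 'v set set" where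
  "graph_edges adj = {{v, w} | v w. adj v w}"

definition acts_by_automorphisms ::
    "('g, 'b) monoid_scheme \<Rightarrow> 'v set \<Rightarrow> ('v \<Rightarrow> 'v \<Rightarrow> bool) \<Rightarrow> ('g \<Rightarrow> 'v \<Rightarrow> 'v) \<Rightarrow> bool" where
  "acts_by_automorphisms G V adj \<phi> \<longleftrightarrow> group G \<and> group_action G V \<phi> \<and>
     (\<forall>h\<in>carrier G. \<forall>v\<in>V. \<forall>w\<in>V. adj (\<phi> h v) (\<phi> h w) \<longleftrightarrow> adj v w)"

definition edge_orbits ::
    "('g, 'b) monoid_scheme \<Rightarrow> ('v \<Rightarrow> 'v \<Rightarrow> bool) \<Rightarrow> ('g \<Rightarrow> 'v \<Rightarrow> 'v) \<Rightarrow> 'v set set set" where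
  "edge_orbits G adj \<phi> = {{\<phi> h ` e | h. h \<in> carrier G} | e. e \<in> graph_edges adj}"

definition cube_measure :: "nat \<Rightarrow> 'v set \<Rightarrow> ('v \<Rightarrow> nat) measure" where
  "cube_measure n V = sigma (V \<rightarrow>\<^sub>E {1..n})
     {{f \<in> V \<rightarrow>\<^sub>E {1..n}. f v = j} | v j. v \<in> V \<and> j \<in> {1..n}}"

definition colourings :: "nat \<Rightarrow> 'v set \<Rightarrow> ('v \<Rightarrow> 'v \<Rightarrow> bool) \<Rightarrow> ('v \<Rightarrow> nat) set" where
  "colourings n V adj = {c \<in> V \<rightarrow>\<^sub>E {1..n}. \<forall>v w. adj v w \<longrightarrow> c v \<noteq> c w}"

definition colouring_measure :: "nat \<Rightarrow> 'v set \<Rightarrow> ('v \<Rightarrow> 'v \<Rightarrow> bool) \<Rightarrow> ('v \<Rightarrow> nat) measure" where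
  "colouring_measure n V adj = restrict_space (cube_measure n V) (colourings n V adj)"

definition fun_act :: "('g, 'b) monoid_scheme \<Rightarrow> ('g \<Rightarrow> 'v \<Rightarrow> 'v) \<Rightarrow> 'v set \<Rightarrow> 'g \<Rightarrow> ('v \<Rightarrow> nat) \<Rightarrow> ('v \<Rightarrow> nat)" where
  "fun_act G \<phi> V h f = (\<lambda>v\<in>V. f (\<phi> (inv\<^bsub>G\<^esub> h) v))"

end

(*
  Label the vertices by independent uniform random reals and colour greedily in increasing order
  of labels: each vertex takes the least colour not used by its lower-labelled neighbours, so at
  most k + 1 colours occur. The colour of v is determined after d rounds as soon as no walk of
  length d leaves v with strictly decreasing labels. A fixed walk has probability at most
  1/(d+1)! of being decreasing and there are at most k^d walks, so almost surely every vertex has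
  such a d, and labels are almost surely distinct, which makes the colouring proper. The
  construction commutes with graph automorphisms and the i.i.d. law is invariant under
  permuting the vertices, hence the law of the colouring is invariant.
*)

theory Submission
  imports Defs "HOL-Combinatorics.Multiset_Permutations"
begin

definition least_free_colour :: "nat set \<Rightarrow> nat" where
  "least_free_colour S = (LEAST j. 0 < j \<and> j \<notin> S)"

lemma least_free_colour_pos: "finite S \<Longrightarrow> 0 < least_free_colour S"
  and least_free_colour_notin: "finite S \<Longrightarrow> least_free_colour S \<notin> S"
proof -
  assume "finite S"
  have "0 < Suc (Max (insert 0 S)) \<and> Suc (Max (insert 0 S)) \<notin> S"
    using \<open>finite S\<close> Max_ge[of "insert 0 S"] by (metis Suc_n_not_le_n finite_insert insertCI zero_less_Suc)
  then have "0 < least_free_colour S \<and> least_free_colour S \<notin> S"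
    unfolding least_free_colour_def by (rule LeastI)
  then show "0 < least_free_colour S" "least_free_colour S \<notin> S" by auto
qed

lemma least_free_colour_le:
  assumes "finite S" "card S \<le> k"
  shows "least_free_colour S \<le> Suc k"
proof -
  have "\<not> {1..Suc k} \<subseteq> S"
    using card_mono[OF assms(1), of "{1..Suc k}"] assms(2) by auto
  then obtain j where j: "j \<in> {1..Suc k}" "j \<notin> S" by blast
  then have "least_free_colour S \<le> j"
    unfolding least_free_colour_def by (intro Least_le) auto
  then show ?thesis using j by auto
qed

lemma least_free_colour_eq_iff:
  assumes "finite S"
  shows "least_free_colour S = j \<longleftrightarrow> 0 < j \<and> j \<notin> S \<and> {1..<j} \<subseteq> S"
proof
  assume j: "least_free_colour S = j"
  have "i \<in> S" if "i \<in> {1..<j}" for i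
  proof -
    have "\<not> (0 < i \<and> i \<notin> S)"
      using that j unfolding least_free_colour_def by (intro not_less_Least) auto
    then show ?thesis using that by auto
  qed
  then show "0 < j \<and> j \<notin> S \<and> {1..<j} \<subseteq> S"
    using least_free_colour_pos[OF assms] least_free_colour_notin[OF assms] j by auto
next
  assume j: "0 < j \<and> j \<notin> S \<and> {1..<j} \<subseteq> S"
  show "least_free_colour S = j"
    unfolding least_free_colour_def
  proof (rule Least_equality)
    show "0 < j \<and> j \<notin> S" using j by auto
    show "j \<le> i" if i: "0 < i \<and> i \<notin> S" for i
    proof (rule ccontr)
      assume "\<not> j \<le> i"
      then have "i \<in> {1..<j}" using i by auto
      then show False using i j by blast
    qed
  qed
qed

definition relabel :: "'v set \<Rightarrow> ('v \<Rightarrow> 'v) \<Rightarrow> ('v \<Rightarrow> 'a) \<Rightarrow> 'v \<Rightarrow> 'a" where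
  "relabel V ch x = (\<lambda>v\<in>V. x (ch v))"

lemma relabel_image_eq_vimage:
  assumes "\<And>v. v \<in> V \<Longrightarrow> ch v \<in> V" "\<And>v. v \<in> V \<Longrightarrow> ch' v \<in> V"
    and "\<And>v. v \<in> V \<Longrightarrow> ch' (ch v) = v" "\<And>v. v \<in> V \<Longrightarrow> ch (ch' v) = v"
    and "A \<subseteq> extensional V"
  shows "relabel V ch' ` A = relabel V ch -` A \<inter> extensional V"
proof -
  have left_inv: "relabel V ch (relabel V ch' f) = f" if "f \<in> extensional V" for f
    using that assms(1,3) by (auto simp: relabel_def extensional_def)
  have right_inv: "relabel V ch' (relabel V ch g) = g" if "g \<in> extensional V" for g
    using that assms(2,4) by (auto simp: relabel_def extensional_def)
  show ?thesis
  proof (intro equalityI subsetI)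
    fix g assume "g \<in> relabel V ch' ` A"
    then obtain f where f: "f \<in> A" "g = relabel V ch' f" by blast
    then have "relabel V ch g = f" using left_inv assms(5) by auto
    moreover have "g \<in> extensional V" using f(2) by (simp add: relabel_def)
    ultimately show "g \<in> relabel V ch -` A \<inter> extensional V" using f(1) by simp
  next
    fix g assume g: "g \<in> relabel V ch -` A \<inter> extensional V"
    then have "g = relabel V ch' (relabel V ch g)" using right_inv by force
    then show "g \<in> relabel V ch' ` A" using g by blast
  qed
qed

lemma relabel_apply [simp]: "v \<in> V \<Longrightarrow> relabel V ch x v = x (ch v)"
  by (simp add: relabel_def)

lemma space_cube_measure: "space (cube_measure n V) = V \<rightarrow>\<^sub>E {1..n}"
  unfolding cube_measure_def by (rule space_measure_of) auto

lemma space_colouring_measure: "space (colouring_measure n V adj) = colourings n V adj"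
  unfolding colouring_measure_def by (auto simp: space_restrict_space space_cube_measure colourings_def)

lemma measurable_into_cube_measure:
  assumes "f \<in> space M \<rightarrow> V \<rightarrow>\<^sub>E {1..n}"
    and "\<And>v. v \<in> V \<Longrightarrow> (\<lambda>x. f x v) \<in> M \<rightarrow>\<^sub>M count_space UNIV"
  shows "f \<in> M \<rightarrow>\<^sub>M cube_measure n V"
  unfolding cube_measure_def
proof (rule measurable_measure_of)
  show "{{g \<in> V \<rightarrow>\<^sub>E {1..n}. g v = j} | v j. v \<in> V \<and> j \<in> {1..n}} \<subseteq> Pow (V \<rightarrow>\<^sub>E {1..n})" by auto
  show "f \<in> space M \<rightarrow> V \<rightarrow>\<^sub>E {1..n}" by (rule assms(1))
  fix A assume "A \<in> {{g \<in> V \<rightarrow>\<^sub>E {1..n}. g v = j} | v j. v \<in> V \<and> j \<in> {1..n}}"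
  then obtain v j where A: "A = {g \<in> V \<rightarrow>\<^sub>E {1..n}. g v = j}" "v \<in> V" by blast
  have "f -` A \<inter> space M = (\<lambda>x. f x v) -` {j} \<inter> space M" using A assms(1) by auto
  also have "\<dots> \<in> sets M" using assms(2)[OF A(2)] by (rule measurable_sets) simp
  finally show "f -` A \<inter> space M \<in> sets M" .
qed

lemma measurable_cube_measure_component:
  assumes "v \<in> V"
  shows "(\<lambda>g. g v) \<in> cube_measure n V \<rightarrow>\<^sub>M count_space UNIV"
  unfolding measurable_count_space_eq2_countable
proof (intro conjI ballI)
  fix j :: nat
  have "(\<lambda>g. g v) -` {j} \<inter> space (cube_measure n V) =
      (if j \<in> {1..n} then {g \<in> V \<rightarrow>\<^sub>E {1..n}. g v = j} else {})"
    using assms by (auto simp: space_cube_measure)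
  also have "\<dots> \<in> sets (cube_measure n V)"
  proof (cases "j \<in> {1..n}")
    case True
    then show ?thesis
      unfolding cube_measure_def using assms by (subst sets_measure_of) (auto intro!: sigma_sets.Basic)
  next
    case False
    then show ?thesis by auto
  qed
  finally show "(\<lambda>g. g v) -` {j} \<inter> space (cube_measure n V) \<in> sets (cube_measure n V)" .
qed auto

lemma measurable_relabel_cube_measure:
  assumes "\<And>v. v \<in> V \<Longrightarrow> ch v \<in> V"
  shows "relabel V ch \<in> cube_measure n V \<rightarrow>\<^sub>M cube_measure n V"
  using assms measurable_cube_measure_component[OF assms]
  by (intro measurable_into_cube_measure) (auto simp: space_cube_measure relabel_def)

primrec descending_walk :: "('v \<Rightarrow> 'v \<Rightarrow> bool) \<Rightarrow> ('v \<Rightarrow> 'a::linorder) \<Rightarrow> nat \<Rightarrow> 'v \<Rightarrow> bool" where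
  "descending_walk adj x 0 v = True"
| "descending_walk adj x (Suc d) v = (\<exists>w. adj v w \<and> x w < x v \<and> descending_walk adj x d w)"

lemma descending_walk_Suc_imp:
  "descending_walk adj x (Suc d) v \<Longrightarrow> descending_walk adj x d v"
  by (induction d arbitrary: v) auto

lemma descending_walk_mono:
  assumes "d' \<le> d" "descending_walk adj x d v"
  shows "descending_walk adj x d' v"
  using assms by (induction d' rule: inc_induct) (blast dest: descending_walk_Suc_imp)+

primrec walks :: "('v \<Rightarrow> 'v \<Rightarrow> bool) \<Rightarrow> nat \<Rightarrow> 'v \<Rightarrow> 'v list set" where
  "walks adj 0 v = {[v]}"
| "walks adj (Suc d) v = (\<Union>w\<in>{w. adj v w}. (#) v ` walks adj d w)"

lemma walks_Cons: "p \<in> walks adj d v \<Longrightarrow> p = v # tl p"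
  by (induction d arbitrary: v p) auto

lemma descending_walk_imp_walk:
  "descending_walk adj x d v \<Longrightarrow> \<exists>p\<in>walks adj d v. sorted_wrt (\<lambda>a b. x b < x a) p"
proof (induction d arbitrary: v)
  case (Suc d)
  then obtain w where w: "adj v w" "x w < x v" "descending_walk adj x d w" by auto
  then obtain p where p: "p \<in> walks adj d w" "sorted_wrt (\<lambda>a b. x b < x a) p"
    using Suc.IH by blast
  have "x b < x v" if "b \<in> set p" for b
  proof -
    have "b = w \<or> b \<in> set (tl p)" using that walks_Cons[OF p(1)] by (metis set_ConsD)
    then show ?thesis using p(2) w(2) walks_Cons[OF p(1)] by (metis sorted_wrt.simps(2) order.strict_trans)
  qed
  then have "sorted_wrt (\<lambda>a b. x b < x a) (v # p)" using p(2) by simp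
  moreover have "v # p \<in> walks adj (Suc d) v" using w p by auto
  ultimately show ?case by blast
qed simp

definition graph_automorphism :: "'v set \<Rightarrow> ('v \<Rightarrow> 'v \<Rightarrow> bool) \<Rightarrow> ('v \<Rightarrow> 'v) \<Rightarrow> bool" where
  "graph_automorphism V adj ch \<longleftrightarrow>
     bij_betw ch V V \<and> (\<forall>v\<in>V. \<forall>w\<in>V. adj (ch v) (ch w) \<longleftrightarrow> adj v w)"

lemma graph_automorphism_action:
  assumes "acts_by_automorphisms G V adj \<phi>" "h \<in> carrier G"
  shows "graph_automorphism V adj (\<phi> h)"
proof -
  interpret group_action G V \<phi> using assms(1) by (simp add: acts_by_automorphisms_def)
  show ?thesis
    using bij_prop0[OF assms(2)] assms unfolding graph_automorphism_def acts_by_automorphisms_def Bij_def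
    by blast
qed

text \<open>\<open>greedy_iter V adj x n v\<close> is the colour of \<open>v\<close> after \<open>n\<close> rounds of the greedy colouring
  in increasing order of \<open>x\<close>; it is final once no descending walk of length \<open>n\<close> starts at
  \<open>v\<close> (\<open>greedy_iter_stable\<close>).\<close>

primrec greedy_iter :: "'v set \<Rightarrow> ('v \<Rightarrow> 'v \<Rightarrow> bool) \<Rightarrow> ('v \<Rightarrow> 'a::linorder) \<Rightarrow> nat \<Rightarrow> 'v \<Rightarrow> nat" where
  "greedy_iter V adj x 0 = (\<lambda>v\<in>V. 1)"
| "greedy_iter V adj x (Suc n) =
     (\<lambda>v\<in>V. least_free_colour {greedy_iter V adj x n w | w. adj v w \<and> x w < x v})"

definition greedy_converges_to :: "'v set \<Rightarrow> ('v \<Rightarrow> 'v \<Rightarrow> bool) \<Rightarrow> ('v \<Rightarrow> 'a::linorder) \<Rightarrow> 'v \<Rightarrow> nat \<Rightarrow> bool" where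
  "greedy_converges_to V adj x v j \<longleftrightarrow> (\<exists>N. \<forall>n\<ge>N. greedy_iter V adj x n v = j)"

text \<open>The colour \<open>1\<close> at vertices where the rounds never stabilise is a junk value.\<close>

definition greedy_colouring :: "'v set \<Rightarrow> ('v \<Rightarrow> 'v \<Rightarrow> bool) \<Rightarrow> ('v \<Rightarrow> 'a::linorder) \<Rightarrow> 'v \<Rightarrow> nat" where
  "greedy_colouring V adj x = (\<lambda>v\<in>V.
     if \<exists>j. greedy_converges_to V adj x v j then LEAST j. greedy_converges_to V adj x v j else 1)"

lemma greedy_converges_to_unique:
  "greedy_converges_to V adj x v i \<Longrightarrow> greedy_converges_to V adj x v j \<Longrightarrow> i = j"
  unfolding greedy_converges_to_def by (metis max.cobounded1 max.cobounded2)

lemma greedy_colouring_eq_limit: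
  assumes "v \<in> V" "greedy_converges_to V adj x v j"
  shows "greedy_colouring V adj x v = j"
proof -
  have "(LEAST i. greedy_converges_to V adj x v i) = j"
    using assms(2) by (intro Least_equality) (auto dest: greedy_converges_to_unique)
  then show ?thesis using assms unfolding greedy_colouring_def by auto
qed

locale bounded_degree_graph =
  fixes V :: "'v set" and adj :: "'v \<Rightarrow> 'v \<Rightarrow> bool" and k :: nat
  assumes simple: "simple_graph V adj" and degree_bounded: "degree_bounded V adj k"
begin

lemma adj_in_V: "adj v w \<Longrightarrow> v \<in> V" "adj v w \<Longrightarrow> w \<in> V"
  and adj_irrefl: "adj v w \<Longrightarrow> v \<noteq> w"
  and adj_sym: "adj v w \<Longrightarrow> adj w v"
  using simple unfolding simple_graph_def by blast+

lemma finite_neighbours: "v \<in> V \<Longrightarrow> finite {w. adj v w}"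
  and card_neighbours_le: "v \<in> V \<Longrightarrow> card {w. adj v w} \<le> k"
  using degree_bounded unfolding degree_bounded_def by auto

lemma finite_neighbour_values: "v \<in> V \<Longrightarrow> finite {f w | w. adj v w \<and> P w}"
  and card_neighbour_values_le: "v \<in> V \<Longrightarrow> card {f w | w. adj v w \<and> P w} \<le> k"
proof -
  assume v: "v \<in> V"
  have eq: "{f w | w. adj v w \<and> P w} = f ` {w. adj v w \<and> P w}" by auto
  have fin: "finite {w. adj v w \<and> P w}"
    using finite_neighbours[OF v] by (rule rev_finite_subset) auto
  show "finite {f w | w. adj v w \<and> P w}" unfolding eq using fin by simp
  have "card (f ` {w. adj v w \<and> P w}) \<le> card {w. adj v w \<and> P w}" by (rule card_image_le[OF fin])
  also have "\<dots> \<le> card {w. adj v w}" using finite_neighbours[OF v] by (intro card_mono) auto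
  finally show "card {f w | w. adj v w \<and> P w} \<le> k" unfolding eq using card_neighbours_le[OF v] by simp
qed

lemma greedy_iter_range: "v \<in> V \<Longrightarrow> greedy_iter V adj x n v \<in> {1..Suc k}"
proof (cases n)
  case (Suc m)
  assume v: "v \<in> V"
  let ?S = "{greedy_iter V adj x m w | w. adj v w \<and> x w < x v}"
  have "finite ?S" by (rule finite_neighbour_values[OF v])
  moreover have "card ?S \<le> k" by (rule card_neighbour_values_le[OF v])
  ultimately show ?thesis
    using v Suc least_free_colour_pos[of ?S] least_free_colour_le[of ?S k] by auto
qed simp

lemma greedy_iter_stable:
  "v \<in> V \<Longrightarrow> \<not> descending_walk adj x d v \<Longrightarrow> d \<le> n \<Longrightarrow> greedy_iter V adj x n v = greedy_iter V adj x d v"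
proof (induction d arbitrary: v n)
  case (Suc d)
  then obtain m where m: "n = Suc m" "d \<le> m" by (cases n) auto
  have "greedy_iter V adj x m w = greedy_iter V adj x d w" if "adj v w" "x w < x v" for w
  proof -
    have "\<not> descending_walk adj x d w" using Suc.prems(2) that by auto
    then show ?thesis using Suc.IH[OF adj_in_V(2)[OF that(1)] _ m(2)] by blast
  qed
  then have "{greedy_iter V adj x m w | w. adj v w \<and> x w < x v} =
      {greedy_iter V adj x d w | w. adj v w \<and> x w < x v}"
    by (intro Collect_cong) (metis (no_types, lifting))
  then show ?case using m Suc.prems by simp
qed simp

lemma greedy_colouring_eq_iter:
  assumes "v \<in> V" "\<not> descending_walk adj x d v"
  shows "greedy_colouring V adj x v = greedy_iter V adj x d v"
proof (rule greedy_colouring_eq_limit[OF assms(1)])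
  show "greedy_converges_to V adj x v (greedy_iter V adj x d v)"
    unfolding greedy_converges_to_def using greedy_iter_stable[OF assms] by blast
qed

lemma greedy_colouring_range: "greedy_colouring V adj x \<in> V \<rightarrow>\<^sub>E {1..Suc k}"
proof -
  have "greedy_colouring V adj x v \<in> {1..Suc k}" if v: "v \<in> V" for v
  proof (cases "\<exists>j. greedy_converges_to V adj x v j")
    case True
    then obtain j N where j: "greedy_converges_to V adj x v j" "\<forall>n\<ge>N. greedy_iter V adj x n v = j"
      unfolding greedy_converges_to_def by blast
    then show ?thesis
      using greedy_colouring_eq_limit[OF v j(1)] greedy_iter_range[OF v, of x N] by auto
  qed (auto simp: greedy_colouring_def v)
  then show ?thesis unfolding greedy_colouring_def by auto
qed

lemma greedy_colouring_neq_lower: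
  assumes "adj a b" "x b < x a" "\<not> descending_walk adj x d a" "\<not> descending_walk adj x d b"
  shows "greedy_colouring V adj x a \<noteq> greedy_colouring V adj x b"
proof -
  have a: "a \<in> V" and b: "b \<in> V" using adj_in_V assms(1) by auto
  let ?S = "{greedy_iter V adj x d w | w. adj a w \<and> x w < x a}"
  have "\<not> descending_walk adj x (Suc d) a" using assms(3) by (metis descending_walk_Suc_imp)
  then have "greedy_colouring V adj x a = greedy_iter V adj x (Suc d) a"
    by (rule greedy_colouring_eq_iter[OF a])
  also have "\<dots> = least_free_colour ?S" using a by simp
  finally have "greedy_colouring V adj x a = least_free_colour ?S" .
  moreover have "greedy_colouring V adj x b \<in> ?S"
    using greedy_colouring_eq_iter[OF b assms(4)] assms(1,2) by auto
  moreover have "least_free_colour ?S \<notin> ?S"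
    by (rule least_free_colour_notin[OF finite_neighbour_values[OF a]])
  ultimately show ?thesis by auto
qed

lemma greedy_colouring_proper:
  assumes "inj_on x V" and "\<forall>v\<in>V. \<exists>d. \<not> descending_walk adj x d v"
  shows "greedy_colouring V adj x \<in> colourings (Suc k) V adj"
proof -
  have "greedy_colouring V adj x v \<noteq> greedy_colouring V adj x w" if vw: "adj v w" for v w
  proof -
    have V: "v \<in> V" "w \<in> V" using adj_in_V vw by auto
    obtain d1 d2 where "\<not> descending_walk adj x d1 v" "\<not> descending_walk adj x d2 w"
      using assms(2) V by blast
    then have d: "\<not> descending_walk adj x (max d1 d2) v" "\<not> descending_walk adj x (max d1 d2) w"
      by (meson descending_walk_mono max.cobounded1 max.cobounded2)+
    have "x v \<noteq> x w" using assms(1) V adj_irrefl[OF vw] by (auto dest: inj_onD)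
    then consider "x w < x v" | "x v < x w" by (metis linorder_neqE)
    then show ?thesis
      using greedy_colouring_neq_lower[OF vw _ d] greedy_colouring_neq_lower[OF adj_sym[OF vw] _ d(2,1)]
      by cases metis+
  qed
  then show ?thesis using greedy_colouring_range[of x] by (simp add: colourings_def)
qed

lemma graph_automorphism_in_V:
  "graph_automorphism V adj ch \<Longrightarrow> v \<in> V \<Longrightarrow> ch v \<in> V"
  unfolding graph_automorphism_def bij_betw_def by blast

lemma relabel_in_colourings:
  assumes "graph_automorphism V adj ch" "f \<in> colourings n V adj"
  shows "relabel V ch f \<in> colourings n V adj"
proof -
  note ch = graph_automorphism_in_V[OF assms(1)]
  have "f \<in> V \<rightarrow>\<^sub>E {1..n}" using assms(2) by (simp add: colourings_def)
  then have "relabel V ch f \<in> V \<rightarrow>\<^sub>E {1..n}"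
    unfolding relabel_def restrict_PiE_iff using ch by (blast dest: PiE_mem)
  moreover have "relabel V ch f v \<noteq> relabel V ch f w" if vw: "adj v w" for v w
  proof -
    have "adj (ch v) (ch w)"
      using assms(1) adj_in_V[OF vw] vw unfolding graph_automorphism_def by blast
    then show ?thesis using assms(2) adj_in_V[OF vw] by (simp add: colourings_def)
  qed
  ultimately show ?thesis by (simp add: colourings_def)
qed

lemma greedy_iter_relabel:
  assumes ch: "graph_automorphism V adj ch"
  shows "v \<in> V \<Longrightarrow> greedy_iter V adj (relabel V ch x) n v = greedy_iter V adj x n (ch v)"
proof (induction n arbitrary: v)
  case 0
  then show ?case using graph_automorphism_in_V[OF ch] by simp
next
  case (Suc n)
  let ?y = "relabel V ch x"
  have aut: "adj (ch v) (ch w) \<longleftrightarrow> adj v w" if "w \<in> V" for w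
    using ch Suc.prems that unfolding graph_automorphism_def by blast
  have onto: "\<exists>w\<in>V. ch w = u" if "u \<in> V" for u
    using ch that unfolding graph_automorphism_def bij_betw_def by (metis imageE)
  have "{greedy_iter V adj ?y n w | w. adj v w \<and> ?y w < ?y v} =
      {greedy_iter V adj x n u | u. adj (ch v) u \<and> x u < x (ch v)}"
  proof (intro equalityI subsetI)
    fix c assume "c \<in> {greedy_iter V adj ?y n w | w. adj v w \<and> ?y w < ?y v}"
    then obtain w where w: "c = greedy_iter V adj ?y n w" "adj v w" "?y w < ?y v" by blast
    have wV: "w \<in> V" using adj_in_V w(2) by auto
    have "c = greedy_iter V adj x n (ch w)" "adj (ch v) (ch w)" "x (ch w) < x (ch v)"
      using w Suc.IH[OF wV] aut[OF wV] Suc.prems wV by simp_all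
    then show "c \<in> {greedy_iter V adj x n u | u. adj (ch v) u \<and> x u < x (ch v)}" by blast
  next
    fix c assume "c \<in> {greedy_iter V adj x n u | u. adj (ch v) u \<and> x u < x (ch v)}"
    then obtain u where u: "c = greedy_iter V adj x n u" "adj (ch v) u" "x u < x (ch v)" by blast
    obtain w where w: "w \<in> V" "ch w = u" using onto adj_in_V(2)[OF u(2)] by blast
    have "c = greedy_iter V adj ?y n w" "adj v w" "?y w < ?y v"
      using u w Suc.IH[OF w(1)] aut[OF w(1)] Suc.prems by simp_all
    then show "c \<in> {greedy_iter V adj ?y n w | w. adj v w \<and> ?y w < ?y v}" by blast
  qed
  then show ?case using Suc.prems graph_automorphism_in_V[OF ch] by simp
qed

lemma greedy_colouring_relabel:
  assumes ch: "graph_automorphism V adj ch"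
  shows "greedy_colouring V adj (relabel V ch x) = relabel V ch (greedy_colouring V adj x)"
proof
  fix v show "greedy_colouring V adj (relabel V ch x) v = relabel V ch (greedy_colouring V adj x) v"
  proof (cases "v \<in> V")
    case True
    have "greedy_converges_to V adj (relabel V ch x) v = greedy_converges_to V adj x (ch v)"
      by (rule ext) (unfold greedy_converges_to_def greedy_iter_relabel[OF ch True], rule refl)
    then show ?thesis
      using True graph_automorphism_in_V[OF ch True] by (auto simp: greedy_colouring_def)
  next
    case False
    then show ?thesis by (simp add: greedy_colouring_def relabel_def)
  qed
qed

end

lemma decreasing_map_iff:
  "sorted_wrt (\<lambda>a b. x b < x a) p \<longleftrightarrow> sorted_wrt (<) (rev (map x p))"
  by (simp add: sorted_wrt_rev sorted_wrt_map)

lemma decreasing_imp_distinct: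
  "sorted_wrt (\<lambda>a b. x b < (x a :: 'a::linorder)) p \<Longrightarrow> distinct p"
  by (simp add: decreasing_map_iff strict_sorted_iff distinct_map)

lemma decreasing_eq:
  fixes x :: "'i \<Rightarrow> 'a::linorder"
  assumes "sorted_wrt (\<lambda>a b. x b < x a) p" "sorted_wrt (\<lambda>a b. x b < x a) q" "set p = set q"
  shows "p = q"
proof -
  have "rev (map x p) = rev (map x q)"
    using assms by (intro strict_sorted_equal) (auto simp: decreasing_map_iff)
  moreover have "inj_on x (set p \<union> set q)"
    using assms(1,3) by (simp add: decreasing_map_iff strict_sorted_iff distinct_map)
  ultimately show ?thesis using inj_on_map_eq_map by (metis rev_is_rev_conv)
qed

locale atomless_real_distribution = prob_space M for M :: "real measure" +
  assumes sets_M: "sets M = sets borel"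
    and emeasure_singleton: "emeasure M {a} = 0"
begin

lemma space_M: "space M = UNIV"
  using sets_eq_imp_space_eq[OF sets_M] by simp

lemma product_prob_space_M: "product_prob_space (\<lambda>_. M)"
  by unfold_locales

lemma prob_space_PiM_M: "prob_space (\<Pi>\<^sub>M i\<in>I. M)"
  by (rule prob_space_PiM) (rule prob_space_axioms)

text \<open>Coordinates outside \<open>I\<close> are constantly \<open>undefined\<close> on the product space.\<close>

lemma measurable_PiM_component_any [measurable]: "(\<lambda>x. x u) \<in> borel_measurable (\<Pi>\<^sub>M i\<in>I. M)"
proof (cases "u \<in> I")
  case True
  then show ?thesis
    using measurable_component_singleton[of u I "\<lambda>_. M"] measurable_cong_sets[OF refl sets_M] by blast
next
  case False
  have "(\<lambda>x. x u) \<in> borel_measurable (\<Pi>\<^sub>M i\<in>I. M) \<longleftrightarrow> (\<lambda>x. undefined :: real) \<in> borel_measurable (\<Pi>\<^sub>M i\<in>I. M)"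
    by (rule measurable_cong) (use False in \<open>auto simp: space_PiM PiE_def extensional_def\<close>)
  then show ?thesis by simp
qed

lemma distr_PiM_pair_components:
  assumes "i \<in> I" "j \<in> I" "i \<noteq> j"
  shows "distr (\<Pi>\<^sub>M i\<in>I. M) (M \<Otimes>\<^sub>M M) (\<lambda>x. (x i, x j)) = M \<Otimes>\<^sub>M M"
proof (rule pair_measure_eqI[symmetric])
  interpret product_prob_space "\<lambda>_. M" I by (rule product_prob_space_M)
  have f: "(\<lambda>x. (x i, x j)) \<in> (\<Pi>\<^sub>M i\<in>I. M) \<rightarrow>\<^sub>M M \<Otimes>\<^sub>M M"
    using assms by (intro measurable_Pair measurable_component_singleton) auto
  show "sigma_finite_measure M" by unfold_locales
  show "sigma_finite_measure M" by unfold_locales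
  show "sets (M \<Otimes>\<^sub>M M) = sets (distr (\<Pi>\<^sub>M i\<in>I. M) (M \<Otimes>\<^sub>M M) (\<lambda>x. (x i, x j)))" by simp
  fix A B assume A: "A \<in> sets M" and B: "B \<in> sets M"
  have "emeasure (distr (\<Pi>\<^sub>M i\<in>I. M) (M \<Otimes>\<^sub>M M) (\<lambda>x. (x i, x j))) (A \<times> B) =
      emeasure (\<Pi>\<^sub>M i\<in>I. M) ((\<lambda>x. (x i, x j)) -` (A \<times> B) \<inter> space (\<Pi>\<^sub>M i\<in>I. M))"
    using f A B by (intro emeasure_distr) auto
  also have "(\<lambda>x. (x i, x j)) -` (A \<times> B) \<inter> space (\<Pi>\<^sub>M i\<in>I. M) =
      {x \<in> space (\<Pi>\<^sub>M i\<in>I. M). \<forall>l\<in>{i, j}. x l \<in> (if l = i then A else B)}"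
    using assms(3) by auto
  also have "emeasure (\<Pi>\<^sub>M i\<in>I. M) \<dots> = (\<Prod>l\<in>{i, j}. emeasure M (if l = i then A else B))"
    using assms A B by (intro emeasure_PiM_Collect) auto
  also have "\<dots> = emeasure M A * emeasure M B" using assms(3) by simp
  finally show "emeasure M A * emeasure M B =
      emeasure (distr (\<Pi>\<^sub>M i\<in>I. M) (M \<Otimes>\<^sub>M M) (\<lambda>x. (x i, x j))) (A \<times> B)" by simp
qed

lemma sets_pair_measure_diagonal: "{p. fst p = snd p} \<in> sets (M \<Otimes>\<^sub>M M)"
proof -
  have "Measurable.pred (borel \<Otimes>\<^sub>M borel) (\<lambda>p::real \<times> real. fst p = snd p)" by measurable
  moreover have "sets (M \<Otimes>\<^sub>M M) = sets (borel \<Otimes>\<^sub>M borel)"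
    by (intro sets_pair_measure_cong) (auto simp: sets_M)
  ultimately show ?thesis by (simp add: pred_def space_pair_measure)
qed

lemma pair_measure_diagonal_null: "{p. fst p = snd p} \<in> null_sets (M \<Otimes>\<^sub>M M)"
proof -
  have "emeasure (M \<Otimes>\<^sub>M M) {p. fst p = snd p} = (\<integral>\<^sup>+a. emeasure M (Pair a -` {p. fst p = snd p}) \<partial>M)"
    by (rule emeasure_pair_measure_alt[OF sets_pair_measure_diagonal])
  also have "\<dots> = (\<integral>\<^sup>+a. emeasure M {a} \<partial>M)"
    by (intro nn_integral_cong arg_cong[where f="emeasure M"]) auto
  finally show ?thesis using sets_pair_measure_diagonal by (simp add: emeasure_singleton null_sets_def)
qed

lemma PiM_ties_null:
  assumes "i \<in> I" "j \<in> I" "i \<noteq> j"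
  shows "{x \<in> space (\<Pi>\<^sub>M i\<in>I. M). x i = x j} \<in> null_sets (\<Pi>\<^sub>M i\<in>I. M)"
proof -
  have f: "(\<lambda>x. (x i, x j)) \<in> (\<Pi>\<^sub>M i\<in>I. M) \<rightarrow>\<^sub>M M \<Otimes>\<^sub>M M"
    using assms by (intro measurable_Pair measurable_component_singleton) auto
  have "{x \<in> space (\<Pi>\<^sub>M i\<in>I. M). x i = x j} = (\<lambda>x. (x i, x j)) -` {p. fst p = snd p} \<inter> space (\<Pi>\<^sub>M i\<in>I. M)"
    by auto
  moreover have "{p. fst p = snd p} \<in> null_sets (distr (\<Pi>\<^sub>M i\<in>I. M) (M \<Otimes>\<^sub>M M) (\<lambda>x. (x i, x j)))"
    unfolding distr_PiM_pair_components[OF assms] by (rule pair_measure_diagonal_null)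
  ultimately show ?thesis using null_sets_distr_iff[OF f] by auto
qed

lemma AE_PiM_inj_on:
  assumes "countable I"
  shows "AE x in (\<Pi>\<^sub>M i\<in>I. M). inj_on x I"
proof -
  have "AE x in (\<Pi>\<^sub>M i\<in>I. M). x i \<noteq> x j" if "i \<in> I" "j \<in> I" "i \<noteq> j" for i j
    by (rule AE_I'[OF PiM_ties_null[OF that]]) auto
  then have "AE x in (\<Pi>\<^sub>M i\<in>I. M). \<forall>i\<in>I. \<forall>j\<in>I. i \<noteq> j \<longrightarrow> x i \<noteq> x j"
    by (simp add: AE_ball_countable[OF assms])
  then show ?thesis by eventually_elim (auto simp: inj_on_def)
qed

lemma measurable_PiM_relabel:
  "ch \<in> I \<rightarrow> I \<Longrightarrow> relabel I ch \<in> (\<Pi>\<^sub>M i\<in>I. M) \<rightarrow>\<^sub>M (\<Pi>\<^sub>M i\<in>I. M)"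
  unfolding relabel_def by (intro measurable_restrict measurable_component_singleton) auto

lemma distr_PiM_relabel:
  "bij_betw ch I I \<Longrightarrow> distr (\<Pi>\<^sub>M i\<in>I. M) (\<Pi>\<^sub>M i\<in>I. M) (relabel I ch) = (\<Pi>\<^sub>M i\<in>I. M)"
  unfolding relabel_def
  by (intro distr_PiM_reindex) (auto simp: bij_betw_def intro: prob_space_axioms)

definition decreasing_event :: "'i set \<Rightarrow> 'i list \<Rightarrow> ('i \<Rightarrow> real) set" where
  "decreasing_event I p = {x \<in> space (\<Pi>\<^sub>M i\<in>I. M). sorted_wrt (\<lambda>a b. x b < x a) p}"

lemma sets_decreasing_event: "decreasing_event I p \<in> sets (\<Pi>\<^sub>M i\<in>I. M)"
proof -
  have "Measurable.pred (\<Pi>\<^sub>M i\<in>I. M)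
      (\<lambda>x. \<forall>i\<in>{..<length p}. \<forall>j\<in>{..<length p}. i < j \<longrightarrow> x (p ! j) < x (p ! i))"
    by measurable
  then show ?thesis
    unfolding decreasing_event_def sorted_wrt_iff_nth_less by (simp add: pred_def)
qed

lemma emeasure_decreasing_event_permute:
  assumes p: "distinct p" "set p \<subseteq> I" and q: "q \<in> permutations_of_set (set p)"
  shows "emeasure (\<Pi>\<^sub>M i\<in>I. M) (decreasing_event I q) = emeasure (\<Pi>\<^sub>M i\<in>I. M) (decreasing_event I p)"
proof -
  have q': "set q = set p" "distinct q" using q by (auto simp: permutations_of_set_def)
  then have len: "length q = length p" using p(1) by (metis distinct_card)
  define \<sigma> where "\<sigma> = permutation_of_list (zip p q)"
  have "\<sigma> permutes set p"
    unfolding \<sigma>_def using p(1) q' len by (intro permutation_of_list_permutes list_permutesI) auto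
  then have \<sigma>: "\<sigma> permutes I" using p(2) by (rule permutes_subset)
  have "map \<sigma> p = q"
    using map_of_zip_nth[OF len[symmetric] p(1)] len
    by (intro nth_equalityI) (auto simp: \<sigma>_def permutation_of_list_def)
  have T: "relabel I \<sigma> \<in> (\<Pi>\<^sub>M i\<in>I. M) \<rightarrow>\<^sub>M (\<Pi>\<^sub>M i\<in>I. M)"
    using permutes_in_image[OF \<sigma>] by (intro measurable_PiM_relabel) auto
  have "relabel I \<sigma> -` decreasing_event I p \<inter> space (\<Pi>\<^sub>M i\<in>I. M) = decreasing_event I q"
  proof -
    have "map (relabel I \<sigma> x) p = map x q" for x :: "_ \<Rightarrow> real"
      using p(2) \<open>map \<sigma> p = q\<close> by (auto simp: relabel_def)
    then show ?thesis
      by (auto simp: decreasing_event_def decreasing_map_iff relabel_def space_PiM space_M)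
  qed
  then show ?thesis
    using emeasure_distr[OF T sets_decreasing_event] distr_PiM_relabel[OF permutes_imp_bij[OF \<sigma>]]
    by metis
qed

lemma measure_decreasing_event_le:
  assumes "set p \<subseteq> I"
  shows "measure (\<Pi>\<^sub>M i\<in>I. M) (decreasing_event I p) \<le> 1 / fact (length p)"
proof (cases "distinct p")
  case False
  then have "decreasing_event I p = {}"
    by (auto simp: decreasing_event_def dest: decreasing_imp_distinct)
  then show ?thesis by simp
next
  case True
  interpret P: prob_space "\<Pi>\<^sub>M i\<in>I. M" by (rule prob_space_PiM_M)
  let ?Q = "permutations_of_set (set p)"
  have "disjoint_family_on (decreasing_event I) ?Q"
    unfolding disjoint_family_on_def decreasing_event_def
    by (auto simp: permutations_of_set_def dest: decreasing_eq)
  then have "(\<Sum>q\<in>?Q. measure (\<Pi>\<^sub>M i\<in>I. M) (decreasing_event I q)) =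
      measure (\<Pi>\<^sub>M i\<in>I. M) (\<Union>q\<in>?Q. decreasing_event I q)"
    using sets_decreasing_event by (intro P.finite_measure_finite_Union[symmetric]) auto
  also have "\<dots> \<le> 1" by simp
  finally have "card ?Q * measure (\<Pi>\<^sub>M i\<in>I. M) (decreasing_event I p) \<le> 1"
    using emeasure_decreasing_event_permute[OF True assms]
    by (simp add: P.emeasure_eq_measure)
  moreover have "card ?Q = fact (length p)" using True by (simp add: distinct_card)
  ultimately show ?thesis by (simp add: field_simps)
qed

end

interpretation uniform_01: atomless_real_distribution "uniform_measure lborel {0..1::real}"
proof (rule atomless_real_distribution.intro)
  show "prob_space (uniform_measure lborel {0..1::real})"
    by (rule prob_space_uniform_measure) auto
  show "atomless_real_distribution_axioms (uniform_measure lborel {0..1::real})"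
    by unfold_locales (auto simp: emeasure_uniform_measure emeasure_lborel_countable)
qed

context bounded_degree_graph
begin

lemma measurable_relabel_colouring_measure:
  assumes "graph_automorphism V adj ch"
  shows "relabel V ch \<in> colouring_measure n V adj \<rightarrow>\<^sub>M colouring_measure n V adj"
  unfolding colouring_measure_def
proof (rule measurable_restrict_space2)
  show "relabel V ch \<in> space (restrict_space (cube_measure n V) (colourings n V adj)) \<rightarrow> colourings n V adj"
  proof
    fix f assume "f \<in> space (restrict_space (cube_measure n V) (colourings n V adj))"
    then have "f \<in> colourings n V adj"
      using space_colouring_measure[of n V adj] by (simp add: colouring_measure_def)
    then show "relabel V ch f \<in> colourings n V adj" by (rule relabel_in_colourings[OF assms])
  qed
  show "relabel V ch \<in> restrict_space (cube_measure n V) (colourings n V adj) \<rightarrow>\<^sub>M cube_measure n V"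
    using graph_automorphism_in_V[OF assms]
    by (intro measurable_restrict_space1 measurable_relabel_cube_measure)
qed

lemma walks_in_V: "v \<in> V \<Longrightarrow> p \<in> walks adj d v \<Longrightarrow> set p \<subseteq> V \<and> length p = Suc d"
proof (induction d arbitrary: v p)
  case (Suc d)
  then obtain w q where "adj v w" "q \<in> walks adj d w" "p = v # q" by auto
  then show ?case using Suc.IH[of w q] Suc.prems adj_in_V by auto
qed simp

lemma finite_walks_card_le: "v \<in> V \<Longrightarrow> finite (walks adj d v) \<and> card (walks adj d v) \<le> k ^ d"
proof (induction d arbitrary: v)
  case (Suc d)
  let ?N = "{w. adj v w}"
  have N: "finite ?N" "card ?N \<le> k" using Suc.prems finite_neighbours card_neighbours_le by auto
  have IH: "finite ((#) v ` walks adj d w) \<and> card ((#) v ` walks adj d w) \<le> k ^ d" if "w \<in> ?N" for w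
    using Suc.IH[of w] adj_in_V(2)[of v w] that card_image_le[of "walks adj d w" "(#) v"] by auto
  have "card (walks adj (Suc d) v) \<le> (\<Sum>w\<in>?N. card ((#) v ` walks adj d w))"
    using card_UN_le[OF N(1)] by simp
  also have "\<dots> \<le> (\<Sum>w\<in>?N. k ^ d)" using IH by (intro sum_mono) auto
  also have "\<dots> \<le> k ^ Suc d" using N(2) by (simp add: mult_right_mono)
  finally show ?case using N IH by simp
qed simp

end

locale countable_bounded_degree_graph = bounded_degree_graph +
  assumes countable_V: "countable V"
begin

abbreviation labelling where
  "labelling \<equiv> \<Pi>\<^sub>M v\<in>V. uniform_measure lborel {0..1::real}"

lemma measurable_greedy_iter [measurable]:
  "(\<lambda>x. greedy_iter V adj x n v) \<in> labelling \<rightarrow>\<^sub>M count_space UNIV"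
proof (induction n arbitrary: v)
  case (Suc n)
  note [measurable] = Suc.IH
  show ?case
  proof (cases "v \<in> V")
    case True
    have [simp]: "finite {w. adj v w}" by (rule finite_neighbours[OF True])
    let ?in = "\<lambda>x i. \<exists>w\<in>{w. adj v w}. x w < x v \<and> greedy_iter V adj x n w = i"
    have eq: "greedy_iter V adj x (Suc n) v = j \<longleftrightarrow> 0 < j \<and> \<not> ?in x j \<and> (\<forall>i\<in>{1..<j}. ?in x i)" for x j
      using True least_free_colour_eq_iff[OF finite_neighbour_values[OF True]] by auto
    have pred: "Measurable.pred labelling (\<lambda>x. 0 < j \<and> \<not> ?in x j \<and> (\<forall>i\<in>{1..<j}. ?in x i))" for j
      by measurable
    show ?thesis
      unfolding measurable_count_space_eq2_countable
    proof (intro conjI ballI)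
      fix j
      have "(\<lambda>x. greedy_iter V adj x (Suc n) v) -` {j} \<inter> space labelling =
          {x \<in> space labelling. greedy_iter V adj x (Suc n) v = j}" by blast
      also have "\<dots> = {x \<in> space labelling. 0 < j \<and> \<not> ?in x j \<and> (\<forall>i\<in>{1..<j}. ?in x i)}"
        unfolding eq ..
      also have "\<dots> \<in> sets labelling" using pred[of j] unfolding pred_def .
      finally show "(\<lambda>x. greedy_iter V adj x (Suc n) v) -` {j} \<inter> space labelling \<in> sets labelling" .
    qed auto
  qed (simp add: measurable_const)
qed (simp add: measurable_const)

lemma measurable_greedy_colouring_at [measurable]:
  "(\<lambda>x. greedy_colouring V adj x v) \<in> labelling \<rightarrow>\<^sub>M count_space UNIV"
proof (cases "v \<in> V")
  case True
  have [measurable]: "Measurable.pred labelling (\<lambda>x. greedy_converges_to V adj x v j)" for j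
    unfolding greedy_converges_to_def by measurable
  let ?P = "\<lambda>x j. greedy_converges_to V adj x v j \<or> (\<forall>i. \<not> greedy_converges_to V adj x v i) \<and> j = 1"
  have eq: "greedy_colouring V adj x v = j \<longleftrightarrow> ?P x j" for x j
  proof (cases "\<exists>i. greedy_converges_to V adj x v i")
    case converges: True
    then obtain i where i: "greedy_converges_to V adj x v i" by blast
    have "greedy_colouring V adj x v = i" by (rule greedy_colouring_eq_limit[OF True i])
    moreover have "greedy_converges_to V adj x v j \<longleftrightarrow> i = j"
      using greedy_converges_to_unique[OF i] i by blast
    ultimately show ?thesis using converges by blast
  next
    case False
    then show ?thesis using True by (auto simp: greedy_colouring_def)
  qed
  have pred: "Measurable.pred labelling (\<lambda>x. ?P x j)" for j by measurable
  show ?thesis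
    unfolding measurable_count_space_eq2_countable
  proof (intro conjI ballI)
    fix j
    have "(\<lambda>x. greedy_colouring V adj x v) -` {j} \<inter> space labelling =
        {x \<in> space labelling. greedy_colouring V adj x v = j}" by blast
    also have "\<dots> = {x \<in> space labelling. ?P x j}" unfolding eq ..
    also have "\<dots> \<in> sets labelling" using pred[of j] unfolding pred_def .
    finally show "(\<lambda>x. greedy_colouring V adj x v) -` {j} \<inter> space labelling \<in> sets labelling" .
  qed auto
qed (simp add: greedy_colouring_def measurable_const)

lemma measurable_greedy_colouring: "greedy_colouring V adj \<in> labelling \<rightarrow>\<^sub>M cube_measure (Suc k) V"
  using greedy_colouring_range by (intro measurable_into_cube_measure) auto

lemma prob_space_labelling: "prob_space labelling"
  by (rule uniform_01.prob_space_PiM_M)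

lemma measure_descending_walks_le:
  assumes v: "v \<in> V"
  shows "measure labelling (\<Union>p\<in>walks adj d v. uniform_01.decreasing_event V p) \<le> k ^ d / fact d"
proof -
  interpret prob_space labelling by (rule prob_space_labelling)
  have walks: "finite (walks adj d v)" "card (walks adj d v) \<le> k ^ d"
    using finite_walks_card_le[OF v] by auto
  have "measure labelling (\<Union>p\<in>walks adj d v. uniform_01.decreasing_event V p) \<le>
      (\<Sum>p\<in>walks adj d v. measure labelling (uniform_01.decreasing_event V p))"
    using walks(1) uniform_01.sets_decreasing_event by (intro finite_measure_subadditive_finite) auto
  also have "\<dots> \<le> (\<Sum>p\<in>walks adj d v. 1 / fact (Suc d))"
    using walks_in_V[OF v] uniform_01.measure_decreasing_event_le by (intro sum_mono) fastforce
  also have "\<dots> \<le> k ^ d / fact (Suc d)"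
    using walks(2) by (simp add: divide_right_mono)
  also have "\<dots> \<le> k ^ d / fact d"
    by (intro divide_left_mono) (auto simp: fact_mono)
  finally show ?thesis .
qed

lemma AE_finite_descent:
  assumes v: "v \<in> V"
  shows "AE x in labelling. \<exists>d. \<not> descending_walk adj x d v"
proof (rule AE_I')
  interpret prob_space labelling by (rule prob_space_labelling)
  define U where "U d = (\<Union>p\<in>walks adj d v. uniform_01.decreasing_event V p)" for d
  have U: "U d \<in> sets labelling" for d
    unfolding U_def using finite_walks_card_le[OF v] uniform_01.sets_decreasing_event
    by (intro sets.finite_UN) auto
  show "{x \<in> space labelling. \<not> (\<exists>d. \<not> descending_walk adj x d v)} \<subseteq> (\<Inter>d. U d)"
    using descending_walk_imp_walk by (fastforce simp: U_def uniform_01.decreasing_event_def)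
  have "measure labelling (\<Inter>d. U d) \<le> inverse (fact d) * real k ^ d" for d
  proof -
    have "measure labelling (\<Inter>d. U d) \<le> measure labelling (U d)"
      using U by (intro finite_measure_mono) auto
    also have "\<dots> \<le> k ^ d / fact d" unfolding U_def by (rule measure_descending_walks_le[OF v])
    finally show ?thesis by (simp add: divide_inverse mult.commute)
  qed
  then have "measure labelling (\<Inter>d. U d) \<le> 0"
    by (intro LIMSEQ_le_const[OF summable_LIMSEQ_zero[OF summable_exp]]) auto
  then have "measure labelling (\<Inter>d. U d) = 0"
    using measure_nonneg[of labelling "\<Inter>d. U d"] by linarith
  moreover have "(\<Inter>d. U d) \<in> sets labelling" using U by auto
  ultimately show "(\<Inter>d. U d) \<in> null_sets labelling"
    by (simp add: emeasure_eq_measure null_sets_def)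
qed

lemma AE_greedy_colouring_proper:
  "AE x in labelling. greedy_colouring V adj x \<in> colourings (Suc k) V adj"
proof -
  have "AE x in labelling. \<forall>v\<in>V. \<exists>d. \<not> descending_walk adj x d v"
    using AE_finite_descent by (simp add: AE_ball_countable[OF countable_V])
  with uniform_01.AE_PiM_inj_on[OF countable_V] show ?thesis
    by eventually_elim (rule greedy_colouring_proper)
qed

lemma sets_colourings: "colourings n V adj \<in> sets (cube_measure n V)"
proof -
  have "colourings n V adj = {c \<in> space (cube_measure n V). \<forall>v\<in>V. \<forall>w\<in>V. adj v w \<longrightarrow> c v \<noteq> c w}"
    using adj_in_V by (auto simp: colourings_def space_cube_measure)
  also have "\<dots> \<in> sets (cube_measure n V)"
  proof (intro sets.sets_Collect_countable_All' countable_V)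
    fix v w assume "v \<in> V" "w \<in> V"
    note [measurable] = measurable_cube_measure_component[OF this(1)] measurable_cube_measure_component[OF this(2)]
    have "Measurable.pred (cube_measure n V) (\<lambda>c. adj v w \<longrightarrow> c v \<noteq> c w)" by measurable
    then show "{c \<in> space (cube_measure n V). adj v w \<longrightarrow> c v \<noteq> c w} \<in> sets (cube_measure n V)"
      by (simp add: pred_def)
  qed
  finally show ?thesis .
qed

lemma colourings_nonempty: "colourings (Suc k) V adj \<noteq> {}"
proof -
  interpret prob_space labelling by (rule prob_space_labelling)
  have "ae_filter labelling \<noteq> bot" by (simp add: ae_filter_eq_bot_iff emeasure_space_1)
  then show ?thesis using eventually_happens[OF AE_greedy_colouring_proper] by blast
qed

text \<open>The default colouring only makes the map total; it is used on a null set.\<close>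

definition greedy_map where
  "greedy_map x = (if greedy_colouring V adj x \<in> colourings (Suc k) V adj
     then greedy_colouring V adj x else (SOME c. c \<in> colourings (Suc k) V adj))"

definition greedy_measure where
  "greedy_measure = distr labelling (colouring_measure (Suc k) V adj) greedy_map"

lemma measurable_greedy_map: "greedy_map \<in> labelling \<rightarrow>\<^sub>M colouring_measure (Suc k) V adj"
  unfolding colouring_measure_def
proof (rule measurable_restrict_space2)
  let ?Col = "colourings (Suc k) V adj"
  have some: "(SOME c. c \<in> ?Col) \<in> ?Col" using colourings_nonempty by (simp add: some_in_eq)
  then show "greedy_map \<in> space labelling \<rightarrow> ?Col" by (simp add: greedy_map_def Pi_iff)
  have "(SOME c. c \<in> ?Col) \<in> space (cube_measure (Suc k) V)"
    using some by (simp add: colourings_def space_cube_measure)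
  moreover have "{x \<in> space labelling. greedy_colouring V adj x \<in> ?Col} \<in> sets labelling"
    using measurable_sets[OF measurable_greedy_colouring sets_colourings]
    by (simp add: vimage_def Int_def conj_commute)
  ultimately show "greedy_map \<in> labelling \<rightarrow>\<^sub>M cube_measure (Suc k) V"
    unfolding greedy_map_def by (intro measurable_If measurable_greedy_colouring) (auto simp: pred_def)
qed

lemma prob_space_greedy_measure: "prob_space greedy_measure"
  unfolding greedy_measure_def
  by (rule prob_space.prob_space_distr[OF prob_space_labelling measurable_greedy_map])

lemma sets_greedy_measure [simp]: "sets greedy_measure = sets (colouring_measure (Suc k) V adj)"
  and space_greedy_measure [simp]: "space greedy_measure = colourings (Suc k) V adj"
  by (simp_all add: greedy_measure_def space_colouring_measure)

lemma distr_greedy_measure_relabel: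
  assumes ch: "graph_automorphism V adj ch"
  shows "distr greedy_measure (colouring_measure (Suc k) V adj) (relabel V ch) = greedy_measure"
proof -
  let ?C = "colouring_measure (Suc k) V adj"
  have bij: "bij_betw ch V V" using ch by (simp add: graph_automorphism_def)
  have R: "relabel V ch \<in> labelling \<rightarrow>\<^sub>M labelling"
    using graph_automorphism_in_V[OF ch] by (intro uniform_01.measurable_PiM_relabel) auto
  have "distr greedy_measure ?C (relabel V ch) = distr labelling ?C (relabel V ch \<circ> greedy_map)"
    unfolding greedy_measure_def
    by (rule distr_distr[OF measurable_relabel_colouring_measure[OF ch] measurable_greedy_map])
  also have "\<dots> = distr labelling ?C (greedy_map \<circ> relabel V ch)"
  proof (rule distr_cong_AE)
    show "AE x in labelling. (relabel V ch \<circ> greedy_map) x = (greedy_map \<circ> relabel V ch) x"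
      using AE_greedy_colouring_proper
    proof eventually_elim
      case (elim x)
      have "greedy_colouring V adj (relabel V ch x) = relabel V ch (greedy_colouring V adj x)"
        by (rule greedy_colouring_relabel[OF ch])
      moreover have "relabel V ch (greedy_colouring V adj x) \<in> colourings (Suc k) V adj"
        by (rule relabel_in_colourings[OF ch elim])
      ultimately show ?case using elim by (simp add: greedy_map_def)
    qed
  qed (use measurable_relabel_colouring_measure[OF ch] measurable_greedy_map R in auto)
  also have "\<dots> = distr (distr labelling labelling (relabel V ch)) ?C greedy_map"
    by (rule distr_distr[OF measurable_greedy_map R, symmetric])
  also have "\<dots> = greedy_measure"
    unfolding greedy_measure_def uniform_01.distr_PiM_relabel[OF bij] ..
  finally show ?thesis .
qed

lemma emeasure_greedy_measure_relabel_image: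
  assumes ch: "graph_automorphism V adj ch" and ch': "graph_automorphism V adj ch'"
    and inv: "\<And>v. v \<in> V \<Longrightarrow> ch' (ch v) = v" "\<And>v. v \<in> V \<Longrightarrow> ch (ch' v) = v"
    and A: "A \<in> sets greedy_measure"
  shows "emeasure greedy_measure (relabel V ch' ` A) = emeasure greedy_measure A"
proof -
  have AC: "A \<subseteq> colourings (Suc k) V adj"
    using sets.sets_into_space[OF A] by simp
  then have "relabel V ch' ` A = relabel V ch -` A \<inter> extensional V"
    using graph_automorphism_in_V[OF ch] graph_automorphism_in_V[OF ch'] inv
    by (intro relabel_image_eq_vimage) (auto simp: colourings_def PiE_def)
  also have "\<dots> = relabel V ch -` A \<inter> colourings (Suc k) V adj"
  proof -
    have "relabel V ch' ` A \<subseteq> colourings (Suc k) V adj"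
      using AC relabel_in_colourings[OF ch'] by auto
    then show ?thesis using calculation by (auto simp: colourings_def PiE_def)
  qed
  also have "emeasure greedy_measure \<dots> = emeasure (distr greedy_measure (colouring_measure (Suc k) V adj) (relabel V ch)) A"
    using measurable_relabel_colouring_measure[OF ch] A
    by (subst emeasure_distr) (auto simp: measurable_cong_sets[OF sets_greedy_measure refl])
  also have "\<dots> = emeasure greedy_measure A" unfolding distr_greedy_measure_relabel[OF ch] ..
  finally show ?thesis .
qed

lemma emeasure_greedy_measure_fun_act:
  assumes act: "acts_by_automorphisms G V adj \<phi>" and h: "h \<in> carrier G"
    and A: "A \<in> sets greedy_measure"
  shows "emeasure greedy_measure (fun_act G \<phi> V h ` A) = emeasure greedy_measure A"
proof -
  interpret group G using act by (simp add: acts_by_automorphisms_def)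
  interpret group_action G V \<phi> using act by (simp add: acts_by_automorphisms_def)
  have inv_h: "inv\<^bsub>G\<^esub> h \<in> carrier G" using h by simp
  have "\<phi> (inv\<^bsub>G\<^esub> h) (\<phi> h v) = v" if "v \<in> V" for v
    using orbit_sym_aux[OF h that refl] .
  moreover have "\<phi> h (\<phi> (inv\<^bsub>G\<^esub> h) v) = v" if "v \<in> V" for v
    using orbit_sym_aux[OF inv_h that refl] h by simp
  ultimately have "emeasure greedy_measure (relabel V (\<phi> (inv\<^bsub>G\<^esub> h)) ` A) = emeasure greedy_measure A"
    using graph_automorphism_action[OF act] h inv_h A by (intro emeasure_greedy_measure_relabel_image)
  then show ?thesis by (simp add: fun_act_def relabel_def[abs_def])
qed

end

theorem theorem5p3:
  fixes V :: "'v set" and adj :: "'v \<Rightarrow> 'v \<Rightarrow> bool" and k :: nat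
    and G :: "('g, 'b) monoid_scheme" and \<phi> :: "'g \<Rightarrow> 'v \<Rightarrow> 'v"
  assumes "countable V"
    and "simple_graph V adj"
    and "degree_bounded V adj k"
    and "acts_by_automorphisms G V adj \<phi>"
    and "finite (orbits G V \<phi>)"
    and "finite (edge_orbits G adj \<phi>)"
  shows "\<exists>\<mu>. prob_space \<mu> \<and> sets \<mu> = sets (colouring_measure (k + 1) V adj)
            \<and> space \<mu> = space (colouring_measure (k + 1) V adj)
            \<and> (\<forall>h\<in>carrier G. \<forall>A\<in>sets \<mu>.
                  emeasure \<mu> (fun_act G \<phi> V h ` A) = emeasure \<mu> A)"
proof -
  interpret countable_bounded_degree_graph V adj k
    using assms(1-3) by unfold_locales
  show ?thesis
    using prob_space_greedy_measure emeasure_greedy_measure_fun_act[OF assms(4)]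
    by (intro exI[of _ greedy_measure]) (simp add: space_colouring_measure)
qed

end
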